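(* Let $\mathcal{A}$ and $\mathcal{B}$ be inequivalent sharp qubit observables given by unit vectors $\vec a,\vec b\in\mathbb{R}^3$ (so $\vec a\neq\pm\vec b$), and let $\theta_{\vec a\vec b}$ be the angle between $\vec a$ and $\vec b$. Then unambiguous discrimination of $\mathcal{A}$ and $\mathcal{B}$ is possible in four shots, with success probability $P_{\rm succ}\ge\sin^2\theta_{\vec a\vec b}$ for every a priori distribution $(\eta,1-\eta)$. That is, there exist a state $\varrho$ on $(\mathbb{C}^2)^{\otimes 4}$ and a partition of $\Omega^4$ ($\Omega=\{\omega_1,\omega_2\}$) into disjoint subsets $R_{\mathcal{A}},R_{\mathcal{B}},R_?$, each invariant under swapping the labels $\omega_1\leftrightarrow\omega_2$ in all four entries, such that $p^{\mathcal{B}}_\varrho(\omega)=0$ for all $\omega\in R_{\mathcal{A}}$, $p^{\mathcal{A}}_\varrho(\omega)=0$ for all $\omega\in R_{\mathcal{B}}$, and $\eta\,p^{\mathcal{A}}_\varrho(R_{\mathcal{A}})+(1-\eta)\,p^{\mathcal{B}}_\varrho(R_{\mathcal{B}})\ge\sin^2\theta_{\vec a\vec b}$ for all $\eta\in[0,1]$ (in particular $p^{\mathcal{A}}_\varrho(R_{\mathcal{A}})>0$ and $p^{\mathcal{B}}_\varrho(R_{\mathcal{B}})>0$).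
   Context: A sharp qubit observable given by a unit vector $\vec a\in\mathbb{R}^3$ has outcome set $\Omega=\{\omega_1,\omega_2\}$ and effects $\mathcal{A}_1=\frac12(I+\vec a\cdot\vec\sigma)$, $\mathcal{A}_2=\frac12(I-\vec a\cdot\vec\sigma)$ on $\mathbb{C}^2$ ($\vec\sigma$ the Pauli matrices); two such observables are equivalent if they coincide up to relabeling outcomes, i.e. $\vec b=\pm\vec a$. For a state $\varrho$ on $(\mathbb{C}^2)^{\otimes 4}$ and $\omega=(\omega_{j_1},\ldots,\omega_{j_4})\in\Omega^4$, $p^{\mathcal{A}}_\varrho(\omega)=\mathrm{tr}[\varrho\,\mathcal{A}_{j_1}\otimes\cdots\otimes\mathcal{A}_{j_4}]$, and $p^{\mathcal{A}}_\varrho(R)=\sum_{\omega\in R}p^{\mathcal{A}}_\varrho(\omega)$. The unknown apparatus (either $\mathcal{A}$ or $\mathcal{B}$, with a priori probabilities $\eta$ and $1-\eta$, outcome labels unknown) is applied to each of the four subsystems; results in $R_{\mathcal{A}}$ (resp. $R_{\mathcal{B}}$) lead to the error-free conclusion $\mathcal{A}$ (resp. $\mathcal{B}$), results in $R_?$ are inconclusive. *)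

theory Defs
  imports "HOL-Analysis.Analysis"
begin

text \<open>A qubit basis index is a bool (False = |0>, True = |1>).
  An outcome in Omega = {omega1, omega2} is a bool (True = omega1, False = omega2).
  Four-fold objects (basis indices of (C^2)^(tensor 4), outcomes in Omega^4) are
  bool lists of length 4. Operators are functions bool list => bool list => complex
  (only entries on length-4 lists matter).\<close>

definition four_lists :: "bool list set" where
  "four_lists = {xs. length xs = 4}"

text \<open>Pauli matrices (rows index first).\<close>
definition sigma_x :: "bool \<Rightarrow> bool \<Rightarrow> complex" where
  "sigma_x i j = (if i \<noteq> j then 1 else 0)"
definition sigma_y :: "bool \<Rightarrow> bool \<Rightarrow> complex" where
  "sigma_y i j = (if i = j then 0 else if i then \<i> else - \<i>)"
definition sigma_z :: "bool \<Rightarrow> bool \<Rightarrow> complex" where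
  "sigma_z i j = (if i = j then (if i then -1 else 1) else 0)"
definition id2 :: "bool \<Rightarrow> bool \<Rightarrow> complex" where
  "id2 i j = (if i = j then 1 else 0)"

definition qubit_effect :: "real^3 \<Rightarrow> bool \<Rightarrow> bool \<Rightarrow> bool \<Rightarrow> complex" where
  "qubit_effect a s i j = (1/2) * (id2 i j + (if s then 1 else -1) *
      (complex_of_real (a$1) * sigma_x i j + complex_of_real (a$2) * sigma_y i j
       + complex_of_real (a$3) * sigma_z i j))"

definition effect4 :: "real^3 \<Rightarrow> bool list \<Rightarrow> bool list \<Rightarrow> bool list \<Rightarrow> complex" where
  "effect4 a \<omega> x y = (\<Prod>k<4. qubit_effect a (\<omega> ! k) (x ! k) (y ! k))"

definition density4 :: "(bool list \<Rightarrow> bool list \<Rightarrow> complex) \<Rightarrow> bool" where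
  "density4 \<rho> \<longleftrightarrow>
     (\<forall>x\<in>four_lists. \<forall>y\<in>four_lists. \<rho> x y = cnj (\<rho> y x)) \<and>
     (\<forall>v :: bool list \<Rightarrow> complex.
        0 \<le> Re (\<Sum>x\<in>four_lists. \<Sum>y\<in>four_lists. cnj (v x) * \<rho> x y * v y)) \<and>
     (\<Sum>x\<in>four_lists. \<rho> x x) = 1"

text \<open>p^A_rho(omega) = tr[rho A_{j1} (x) ... (x) A_{j4}] (a real number for a state).\<close>
definition prob4 :: "(bool list \<Rightarrow> bool list \<Rightarrow> complex) \<Rightarrow> real^3 \<Rightarrow> bool list \<Rightarrow> real" where
  "prob4 \<rho> a \<omega> = Re (\<Sum>x\<in>four_lists. \<Sum>y\<in>four_lists. \<rho> x y * effect4 a \<omega> y x)"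

definition prob4_set :: "(bool list \<Rightarrow> bool list \<Rightarrow> complex) \<Rightarrow> real^3 \<Rightarrow> bool list set \<Rightarrow> real" where
  "prob4_set \<rho> a R = (\<Sum>\<omega>\<in>R. prob4 \<rho> a \<omega>)"

definition relabel_invariant :: "bool list set \<Rightarrow> bool" where
  "relabel_invariant R \<longleftrightarrow> (\<forall>\<omega>\<in>R. map Not \<omega> \<in> R)"

definition angle3 :: "real^3 \<Rightarrow> real^3 \<Rightarrow> real" where
  "angle3 a b = arccos ((a \<bullet> b) / (norm a * norm b))"

end

theory Submission
  imports Defs
begin

text \<open>For a unit vector n let \<phi>(n) = (n\<cdot>\<sigma> \<otimes> I)(|01\<rangle> - |10\<rangle>). Measuring n on both
  halves of \<phi>(n) always yields two different outcomes, while measuring m yields two equal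
  outcomes with probability 1 - (n\<cdot>m)^2. Send the state \<phi>(b) \<otimes> \<phi>(a) through the apparatus.
  With \<B> the first two outcomes never agree, so their agreement identifies \<A>; this happens
  with probability 1 - (a\<cdot>b)^2 = sin^2 \<theta> under \<A>. With \<A> the last two outcomes never
  agree, so disagreement in the first pair together with agreement in the second identifies \<B>;
  this happens with probability 1 \<cdot> (1 - (a\<cdot>b)^2) under \<B>. Both events only compare
  outcomes, so they are invariant under relabelling.\<close>

lemma four_lists_eq: "four_lists = (\<lambda>(p, q, r, s). [p, q, r, s]) ` UNIV"
proof -
  have "\<exists>p q r s. x = [p, q, r, s]" if "length x = 4" for x :: "bool list"
    using that by (auto simp: numeral_eq_Suc length_Suc_conv)
  then show ?thesis
    unfolding four_lists_def by (auto simp: image_iff)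
qed

lemma finite_four_lists: "finite four_lists"
  unfolding four_lists_eq by simp

lemma four_listsE:
  assumes "\<omega> \<in> four_lists"
  obtains p q r s where "\<omega> = [p, q, r, s]"
  using assms unfolding four_lists_eq by auto

lemma sum_four_lists:
  "(\<Sum>x\<in>four_lists. h x) = (\<Sum>p\<in>UNIV. \<Sum>q\<in>UNIV. \<Sum>r\<in>UNIV. \<Sum>s\<in>UNIV. h [p, q, r, s])"
proof -
  have inj: "inj (\<lambda>(p :: bool, q :: bool, r :: bool, s :: bool). [p, q, r, s])"
    by (auto simp: inj_def)
  have "(\<Sum>x\<in>four_lists. h x) = (\<Sum>(p, q, r, s)\<in>UNIV. h [p, q, r, s])"
    unfolding four_lists_eq by (subst sum.reindex[OF inj]) (simp add: case_prod_beta)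
  also have "\<dots> = (\<Sum>p\<in>UNIV. \<Sum>q\<in>UNIV. \<Sum>r\<in>UNIV. \<Sum>s\<in>UNIV. h [p, q, r, s])"
    by (simp add: UNIV_Times_UNIV[symmetric] sum.cartesian_product[symmetric]
        del: UNIV_Times_UNIV)
  finally show ?thesis .
qed

lemma sum_four_lists_pair_product:
  fixes f g :: "bool \<Rightarrow> bool \<Rightarrow> 'a::comm_semiring_0"
  shows "(\<Sum>x\<in>four_lists. f (x!0) (x!1) * g (x!2) (x!3)) =
    (\<Sum>p\<in>UNIV. \<Sum>q\<in>UNIV. f p q) * (\<Sum>r\<in>UNIV. \<Sum>s\<in>UNIV. g r s)"
  by (simp add: sum_four_lists UNIV_bool algebra_simps)

lemma sum_four_lists_pair_product2:
  fixes F G :: "bool \<Rightarrow> bool \<Rightarrow> bool \<Rightarrow> bool \<Rightarrow> 'a::comm_semiring_0"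
  shows "(\<Sum>x\<in>four_lists. \<Sum>y\<in>four_lists.
      F (x!0) (x!1) (y!0) (y!1) * G (x!2) (x!3) (y!2) (y!3)) =
    (\<Sum>p\<in>UNIV. \<Sum>q\<in>UNIV. \<Sum>p'\<in>UNIV. \<Sum>q'\<in>UNIV. F p q p' q') *
    (\<Sum>r\<in>UNIV. \<Sum>s\<in>UNIV. \<Sum>r'\<in>UNIV. \<Sum>s'\<in>UNIV. G r s r' s')"
proof -
  have "(\<Sum>y\<in>four_lists. F p q (y!0) (y!1) * G r s (y!2) (y!3)) =
      (\<Sum>p'\<in>UNIV. \<Sum>q'\<in>UNIV. F p q p' q') * (\<Sum>r'\<in>UNIV. \<Sum>s'\<in>UNIV. G r s r' s')"
    for p q r s
    by (rule sum_four_lists_pair_product)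
  then have "(\<Sum>x\<in>four_lists. \<Sum>y\<in>four_lists.
      F (x!0) (x!1) (y!0) (y!1) * G (x!2) (x!3) (y!2) (y!3)) =
      (\<Sum>x\<in>four_lists. (\<Sum>p'\<in>UNIV. \<Sum>q'\<in>UNIV. F (x!0) (x!1) p' q') *
        (\<Sum>r'\<in>UNIV. \<Sum>s'\<in>UNIV. G (x!2) (x!3) r' s'))"
    by simp
  also have "\<dots> = (\<Sum>p\<in>UNIV. \<Sum>q\<in>UNIV. \<Sum>p'\<in>UNIV. \<Sum>q'\<in>UNIV. F p q p' q') *
      (\<Sum>r\<in>UNIV. \<Sum>s\<in>UNIV. \<Sum>r'\<in>UNIV. \<Sum>s'\<in>UNIV. G r s r' s')"
    by (rule sum_four_lists_pair_product)
  finally show ?thesis .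
qed

lemma inner_square_less_1:
  fixes a b :: "'a::real_inner"
  assumes "norm a = 1" "norm b = 1" "b \<noteq> a" "b \<noteq> - a"
  shows "(a \<bullet> b)\<^sup>2 < 1"
proof -
  have "\<bar>a \<bullet> b\<bar> \<noteq> 1"
  proof
    assume "\<bar>a \<bullet> b\<bar> = 1"
    then have "b = a \<or> b = - a"
      using norm_cauchy_schwarz_abs_eq[of a b] assms(1,2) by auto
    with assms(3,4) show False by blast
  qed
  moreover have "\<bar>a \<bullet> b\<bar> \<le> 1"
    using Cauchy_Schwarz_ineq2[of a b] assms(1,2) by simp
  ultimately show ?thesis
    by (simp add: abs_square_less_1)
qed

lemma sin_angle3_squared:
  assumes "norm a = 1" "norm b = 1"
  shows "(sin (angle3 a b))\<^sup>2 = 1 - (a \<bullet> b)\<^sup>2"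
proof -
  have "\<bar>a \<bullet> b\<bar> \<le> 1"
    using Cauchy_Schwarz_ineq2[of a b] assms by simp
  then show ?thesis
    using assms by (simp add: angle3_def sin_arccos abs_le_iff abs_square_le_1)
qed

definition pure_state :: "(bool list \<Rightarrow> complex) \<Rightarrow> bool list \<Rightarrow> bool list \<Rightarrow> complex" where
  "pure_state \<psi> x y = \<psi> x * cnj (\<psi> y)"

lemma density4_pure_state:
  assumes "(\<Sum>x\<in>four_lists. (cmod (\<psi> x))\<^sup>2) = 1"
  shows "density4 (pure_state \<psi>)"
  unfolding density4_def
proof (intro conjI ballI allI)
  fix x y
  show "pure_state \<psi> x y = cnj (pure_state \<psi> y x)"
    by (simp add: pure_state_def)
next
  fix v :: "bool list \<Rightarrow> complex"
  define z where "z = (\<Sum>x\<in>four_lists. cnj (v x) * \<psi> x)"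
  have "(\<Sum>x\<in>four_lists. \<Sum>y\<in>four_lists. cnj (v x) * pure_state \<psi> x y * v y) = z * cnj z"
    unfolding z_def pure_state_def cnj_sum sum_product by (simp add: mult_ac)
  also have "\<dots> = of_real ((cmod z)\<^sup>2)"
    by (simp add: complex_mult_cnj cmod_power2)
  finally show "0 \<le> Re (\<Sum>x\<in>four_lists. \<Sum>y\<in>four_lists. cnj (v x) * pure_state \<psi> x y * v y)"
    by simp
next
  have "(\<Sum>x\<in>four_lists. pure_state \<psi> x x) = of_real (\<Sum>x\<in>four_lists. (cmod (\<psi> x))\<^sup>2)"
    by (simp add: pure_state_def complex_mult_cnj cmod_power2)
  then show "(\<Sum>x\<in>four_lists. pure_state \<psi> x x) = 1"
    using assms by simp
qed

definition pauli_dot :: "real^3 \<Rightarrow> bool \<Rightarrow> bool \<Rightarrow> complex" where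
  "pauli_dot n i j =
     of_real (n$1) * sigma_x i j + of_real (n$2) * sigma_y i j + of_real (n$3) * sigma_z i j"

text \<open>The vector (n\<cdot>\<sigma> \<otimes> I)(|01\<rangle> - |10\<rangle>), of norm \<surd>2 when n is a unit vector.\<close>

definition twisted_singlet :: "real^3 \<Rightarrow> bool \<Rightarrow> bool \<Rightarrow> complex" where
  "twisted_singlet n p q = (if q then pauli_dot n p False else - pauli_dot n p True)"

definition pair_expectation ::
    "(bool \<Rightarrow> bool \<Rightarrow> complex) \<Rightarrow> real^3 \<Rightarrow> bool \<Rightarrow> bool \<Rightarrow> complex" where
  "pair_expectation \<phi> m s t = (\<Sum>p\<in>UNIV. \<Sum>q\<in>UNIV. \<Sum>p'\<in>UNIV. \<Sum>q'\<in>UNIV.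
      \<phi> p q * cnj (\<phi> p' q') * qubit_effect m s p' p * qubit_effect m t q' q)"

lemma twisted_singlet_simps:
  "twisted_singlet n False True = of_real (n$3)"
  "twisted_singlet n False False = Complex (- n$1) (n$2)"
  "twisted_singlet n True True = Complex (n$1) (n$2)"
  "twisted_singlet n True False = of_real (n$3)"
  by (simp_all add: twisted_singlet_def pauli_dot_def sigma_x_def sigma_y_def sigma_z_def
      complex_eq_iff)

lemma qubit_effect_simps:
  "qubit_effect m s False False = of_real ((1 + (if s then 1 else -1) * m$3) / 2)"
  "qubit_effect m s True True = of_real ((1 - (if s then 1 else -1) * m$3) / 2)"
  "qubit_effect m s False True =
     Complex ((if s then 1 else -1) * m$1 / 2) (- (if s then 1 else -1) * m$2 / 2)"
  "qubit_effect m s True False =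
     Complex ((if s then 1 else -1) * m$1 / 2) ((if s then 1 else -1) * m$2 / 2)"
  by (simp_all add: qubit_effect_def sigma_x_def sigma_y_def sigma_z_def id2_def complex_eq_iff)

lemma norm_eq_1_vec3:
  assumes "norm (n :: real^3) = 1"
  shows "(n$1)\<^sup>2 + (n$2)\<^sup>2 + (n$3)\<^sup>2 = 1"
proof -
  have "n \<bullet> n = 1"
    using assms by (simp add: norm_eq_1)
  then show ?thesis
    by (simp add: inner_vec_def sum_3 power2_eq_square)
qed

lemma sum_norm_twisted_singlet:
  assumes "norm n = 1"
  shows "(\<Sum>p\<in>UNIV. \<Sum>q\<in>UNIV. (cmod (twisted_singlet n p q))\<^sup>2) = 2"
  using norm_eq_1_vec3[OF assms]
  by (simp add: UNIV_bool twisted_singlet_simps cmod_power2)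

lemma pair_expectation_twisted_singlet:
  assumes "norm n = 1" "norm m = 1"
  shows "pair_expectation (twisted_singlet n) m s t =
    of_real (if s = t then 1 - (n \<bullet> m)\<^sup>2 else (n \<bullet> m)\<^sup>2)"
proof -
  have coords: "pair_expectation (twisted_singlet n) m s t =
    of_real (((n$1)\<^sup>2 + (n$2)\<^sup>2 + (n$3)\<^sup>2 + (if s = t then 1 else -1) *
      (((n$1)\<^sup>2 + (n$2)\<^sup>2 + (n$3)\<^sup>2) * ((m$1)\<^sup>2 + (m$2)\<^sup>2 + (m$3)\<^sup>2)
       - 2 * (n$1 * m$1 + n$2 * m$2 + n$3 * m$3)\<^sup>2)) / 2)"
    unfolding pair_expectation_def
    by (cases s; cases t;
        simp add: UNIV_bool twisted_singlet_simps qubit_effect_simps complex_eq_iff)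
      (simp_all add: algebra_simps power2_eq_square divide_simps)
  have inner: "n$1 * m$1 + n$2 * m$2 + n$3 * m$3 = n \<bullet> m"
    by (simp add: inner_vec_def sum_3)
  show ?thesis
    unfolding coords norm_eq_1_vec3[OF assms(1)] norm_eq_1_vec3[OF assms(2)] inner
    by (simp add: algebra_simps)
qed

lemma prob4_pure_state_pair_product:
  "prob4 (pure_state (\<lambda>x. c * (\<phi> (x!0) (x!1) * \<zeta> (x!2) (x!3)))) m [w0, w1, w2, w3] =
    (cmod c)\<^sup>2 * Re (pair_expectation \<phi> m w0 w1 * pair_expectation \<zeta> m w2 w3)"
proof -
  have "(\<Sum>x\<in>four_lists. \<Sum>y\<in>four_lists.
      pure_state (\<lambda>x. c * (\<phi> (x!0) (x!1) * \<zeta> (x!2) (x!3))) x y *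
      effect4 m [w0, w1, w2, w3] y x) =
    (\<Sum>x\<in>four_lists. \<Sum>y\<in>four_lists.
      (c * cnj c * \<phi> (x!0) (x!1) * cnj (\<phi> (y!0) (y!1))
         * qubit_effect m w0 (y!0) (x!0) * qubit_effect m w1 (y!1) (x!1)) *
      (\<zeta> (x!2) (x!3) * cnj (\<zeta> (y!2) (y!3))
         * qubit_effect m w2 (y!2) (x!2) * qubit_effect m w3 (y!3) (x!3)))"
    by (simp add: pure_state_def effect4_def numeral_eq_Suc lessThan_Suc mult_ac)
  also have "\<dots> = c * cnj c * pair_expectation \<phi> m w0 w1 * pair_expectation \<zeta> m w2 w3"
    by (subst sum_four_lists_pair_product2)
      (simp add: pair_expectation_def sum_distrib_left mult.assoc)
  also have "\<dots> =
      of_real ((cmod c)\<^sup>2) * (pair_expectation \<phi> m w0 w1 * pair_expectation \<zeta> m w2 w3)"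
    by (simp only: complex_norm_square mult.assoc)
  finally show ?thesis
    unfolding prob4_def by simp
qed

definition discriminating_state :: "real^3 \<Rightarrow> real^3 \<Rightarrow> bool list \<Rightarrow> bool list \<Rightarrow> complex" where
  "discriminating_state a b =
     pure_state (\<lambda>x. 1/2 * (twisted_singlet b (x!0) (x!1) * twisted_singlet a (x!2) (x!3)))"

lemma density4_discriminating_state:
  assumes "norm a = 1" "norm b = 1"
  shows "density4 (discriminating_state a b)"
proof -
  let ?sq = "\<lambda>n p q. (cmod (twisted_singlet n p q))\<^sup>2"
  have "(\<Sum>x\<in>four_lists.
      (cmod (1/2 * (twisted_singlet b (x!0) (x!1) * twisted_singlet a (x!2) (x!3))))\<^sup>2) =
    1/4 * (\<Sum>x\<in>four_lists. ?sq b (x!0) (x!1) * ?sq a (x!2) (x!3))"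
    by (simp add: norm_mult power_mult_distrib power_divide sum_distrib_left)
  also have "\<dots> = 1/4 * ((\<Sum>p\<in>UNIV. \<Sum>q\<in>UNIV. ?sq b p q) * (\<Sum>r\<in>UNIV. \<Sum>s\<in>UNIV. ?sq a r s))"
    using sum_four_lists_pair_product[of "?sq b" "?sq a"] by simp
  also have "\<dots> = 1"
    by (simp add: sum_norm_twisted_singlet assms)
  finally show ?thesis
    unfolding discriminating_state_def by (rule density4_pure_state)
qed

lemma prob4_discriminating_state:
  assumes "norm a = 1" "norm b = 1" "norm m = 1"
  shows "prob4 (discriminating_state a b) m [w0, w1, w2, w3] =
    (if w0 = w1 then 1 - (b \<bullet> m)\<^sup>2 else (b \<bullet> m)\<^sup>2) *
    (if w2 = w3 then 1 - (a \<bullet> m)\<^sup>2 else (a \<bullet> m)\<^sup>2) / 4"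
  unfolding discriminating_state_def prob4_pure_state_pair_product
    pair_expectation_twisted_singlet[OF assms(1,3)] pair_expectation_twisted_singlet[OF assms(2,3)]
  by (simp add: power_divide del: of_real_power of_real_diff)

definition region_A :: "bool list set" where
  "region_A = {\<omega>\<in>four_lists. \<omega>!0 = \<omega>!1}"

definition region_B :: "bool list set" where
  "region_B = {\<omega>\<in>four_lists. \<omega>!0 \<noteq> \<omega>!1 \<and> \<omega>!2 = \<omega>!3}"

definition region_inconclusive :: "bool list set" where
  "region_inconclusive = {\<omega>\<in>four_lists. \<omega>!0 \<noteq> \<omega>!1 \<and> \<omega>!2 \<noteq> \<omega>!3}"

lemma discriminating_state_unambiguous:
  assumes "norm a = 1" "norm b = 1"
  shows "\<forall>\<omega>\<in>region_A. prob4 (discriminating_state a b) b \<omega> = 0"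
    and "\<forall>\<omega>\<in>region_B. prob4 (discriminating_state a b) a \<omega> = 0"
  using assms
  by (auto elim!: four_listsE simp: region_A_def region_B_def prob4_discriminating_state norm_eq_1)

lemma discriminating_state_success:
  assumes "norm a = 1" "norm b = 1"
  shows "prob4_set (discriminating_state a b) a region_A = 1 - (a \<bullet> b)\<^sup>2"
    and "prob4_set (discriminating_state a b) b region_B = 1 - (a \<bullet> b)\<^sup>2"
  using assms
  unfolding prob4_set_def region_A_def region_B_def sum.inter_filter[OF finite_four_lists]
    sum_four_lists
  by (simp_all add: UNIV_bool prob4_discriminating_state norm_eq_1 inner_commute)

lemma regions_partition:
  "region_A \<union> region_B \<union> region_inconclusive = four_lists"
  "region_A \<inter> region_B = {}" "region_A \<inter> region_inconclusive = {}"
  "region_B \<inter> region_inconclusive = {}"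
  by (auto simp: region_A_def region_B_def region_inconclusive_def)

lemma regions_relabel_invariant:
  "relabel_invariant region_A" "relabel_invariant region_B"
  "relabel_invariant region_inconclusive"
  by (auto simp: relabel_invariant_def region_A_def region_B_def region_inconclusive_def
      four_lists_def)

theorem proposition6:
  fixes a b :: "real^3"
  assumes "norm a = 1" and "norm b = 1" and "b \<noteq> a" and "b \<noteq> - a"
  shows "\<exists>\<rho> RA RB RQ.
     density4 \<rho> \<and>
     RA \<union> RB \<union> RQ = four_lists \<and>
     RA \<inter> RB = {} \<and> RA \<inter> RQ = {} \<and> RB \<inter> RQ = {} \<and>
     relabel_invariant RA \<and> relabel_invariant RB \<and> relabel_invariant RQ \<and>
     (\<forall>\<omega>\<in>RA. prob4 \<rho> b \<omega> = 0) \<and>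
     (\<forall>\<omega>\<in>RB. prob4 \<rho> a \<omega> = 0) \<and>
     (\<forall>\<eta>::real. 0 \<le> \<eta> \<and> \<eta> \<le> 1 \<longrightarrow>
        \<eta> * prob4_set \<rho> a RA + (1 - \<eta>) * prob4_set \<rho> b RB \<ge> (sin (angle3 a b))\<^sup>2) \<and>
     prob4_set \<rho> a RA > 0 \<and> prob4_set \<rho> b RB > 0"
proof -
  let ?\<rho> = "discriminating_state a b"
  have "(sin (angle3 a b))\<^sup>2 = 1 - (a \<bullet> b)\<^sup>2" "1 - (a \<bullet> b)\<^sup>2 > 0"
    using sin_angle3_squared[OF assms(1,2)] inner_square_less_1[OF assms] by simp_all
  then have "\<forall>\<eta>::real. 0 \<le> \<eta> \<and> \<eta> \<le> 1 \<longrightarrow> \<eta> * prob4_set ?\<rho> a region_A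
      + (1 - \<eta>) * prob4_set ?\<rho> b region_B \<ge> (sin (angle3 a b))\<^sup>2"
    "prob4_set ?\<rho> a region_A > 0" "prob4_set ?\<rho> b region_B > 0"
    by (simp_all add: discriminating_state_success[OF assms(1,2)] algebra_simps)
  then show ?thesis
    using density4_discriminating_state[OF assms(1,2)]
      discriminating_state_unambiguous[OF assms(1,2)] regions_partition regions_relabel_invariant
    by blast
qed

end
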